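(* Let $q\ge 2$ and $m\ge 1$ be fixed integers. For integers $n\ge m$ let $c^{\rm coord}_q(n,m)$ denote the number of different unordered partitions of the hypercube ${\bf Z}_q^n$ into $q^m$ subcubes of dimension $n-m$ each. Then, as $n\to\infty$, $$c^{\rm coord}_q(n,m)\sim n^{\frac{q^m-1}{q-1}}.$$
   Context: A $d$-dimensional subcube of ${\bf Z}_q^n$ is a subset of ${\bf Z}_q^n$ obtained by fixing the values of some $n-d$ coordinates and letting each of the remaining $d$ coordinates run through all of ${\bf Z}_q$. A partition into subcubes is a collection of subcubes such that each vector of ${\bf Z}_q^n$ lies in exactly one of them. *)

theory Defs
  imports Complex_Main "HOL-Library.FuncSet" "HOL-Library.Landau_Symbols"
begin

definition hcube :: "nat \<Rightarrow> nat \<Rightarrow> (nat \<Rightarrow> nat) set" where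
  "hcube q n = PiE {..<n} (\<lambda>_. {..<q})"

definition subcube :: "nat \<Rightarrow> nat \<Rightarrow> nat \<Rightarrow> (nat \<Rightarrow> nat) set \<Rightarrow> bool" where
  "subcube q n d C \<longleftrightarrow> d \<le> n \<and>
     (\<exists>S a. S \<subseteq> {..<n} \<and> card S = n - d \<and> (\<forall>i\<in>S. a i < q) \<and>
            C = {x \<in> hcube q n. \<forall>i\<in>S. x i = a i})"

definition subcube_partition :: "nat \<Rightarrow> nat \<Rightarrow> (nat \<Rightarrow> nat) set set \<Rightarrow> bool" where
  "subcube_partition q n P \<longleftrightarrow>
     (\<forall>C\<in>P. \<exists>d. subcube q n d C) \<and> (\<forall>x\<in>hcube q n. \<exists>!C. C \<in> P \<and> x \<in> C)"

definition c_coord :: "nat \<Rightarrow> nat \<Rightarrow> nat \<Rightarrow> nat" where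
  "c_coord q n m = card {P. subcube_partition q n P \<and> (\<forall>C\<in>P. subcube q n (n - m) C)
                              \<and> card P = q ^ m}"

end

theory Submission
  imports Defs
begin

text \<open>
  Splitting a partition of the hypercube along a coordinate i fixed by some of its cubes shows,
  by induction, that a partition whose cubes fix the coordinates in U has at least
  1 + (q - 1) |U| cubes, and at least 2 + (q - 1) |U| cubes if no coordinate is fixed by all
  cubes (split along a coordinate fixed by as few cubes as possible). Let N = (q^m - 1)/(q - 1),
  so that q^m = 1 + (q - 1) N. A partition into q^m cubes of codimension m therefore either
  stacks q partitions of codimension m - 1 along a coordinate fixed by all cubes, or fixes fewer
  than N coordinates altogether; there are only O(n^(N-1)) partitions of the second kind, whence
  c(n, m) <= n c(n, m - 1)^q + O(n^(N-1)) <= (n + K)^N. Conversely, labelling the N inner nodes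
  of the complete q-ary tree of depth m by distinct coordinates gives n (n - 1) ... (n - N + 1)
  distinct partitions.
\<close>

definition repunit :: "nat \<Rightarrow> nat \<Rightarrow> nat" where
  "repunit q m = (\<Sum>k<m. q ^ k)"

lemma repunit_Suc: "repunit q (Suc m) = 1 + q * repunit q m"
  unfolding repunit_def sum.lessThan_Suc_shift by (simp add: sum_distrib_left)

lemma repunit_eq: "(q - 1) * repunit q m = q ^ m - 1"
proof (cases "q = 0")
  case True
  then show ?thesis by (cases m) (simp_all add: repunit_def)
next
  case False
  have "int ((q - 1) * repunit q m) = int (q ^ m - 1)"
    using False power_diff_1_eq[of "int q" m] by (simp add: repunit_def of_nat_diff)
  then show ?thesis by (simp only: of_nat_eq_iff)
qed

lemma real_repunit: "2 \<le> q \<Longrightarrow> real (repunit q m) = (real q ^ m - 1) / (real q - 1)"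
proof -
  assume "2 \<le> q"
  then have "real (q - 1) * real (repunit q m) = real (q ^ m - 1)"
    using repunit_eq[of q m] by (metis of_nat_mult)
  moreover have "real (q - 1) = real q - 1" "real (q ^ m - 1) = real q ^ m - 1"
    using \<open>2 \<le> q\<close> by (simp_all add: of_nat_diff)
  ultimately show ?thesis using \<open>2 \<le> q\<close> by (simp add: field_simps)
qed

lemma card_subsets_card_le: "card {S. S \<subseteq> {..<n} \<and> card S \<le> k} \<le> Suc k * (n + 1) ^ k"
proof -
  let ?L = "{xs. set xs \<subseteq> {..<n} \<and> length xs \<le> k}"
  have "{S. S \<subseteq> {..<n} \<and> card S \<le> k} \<subseteq> set ` ?L"
  proof
    fix S assume "S \<in> {S. S \<subseteq> {..<n} \<and> card S \<le> k}"
    moreover then have "finite S" using finite_subset by blast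
    ultimately show "S \<in> set ` ?L"
      by (intro image_eqI[of _ _ "sorted_list_of_set S"]) auto
  qed
  then have "card {S. S \<subseteq> {..<n} \<and> card S \<le> k} \<le> card (set ` ?L)"
    by (intro card_mono finite_imageI finite_lists_length_le) auto
  also have "\<dots> \<le> card ?L" by (intro card_image_le finite_lists_length_le) simp
  also have "\<dots> = (\<Sum>i\<le>k. n ^ i)" by (simp add: card_lists_length_le)
  also have "\<dots> \<le> (\<Sum>i\<le>k. (n + 1) ^ k)"
    by (intro sum_mono) (meson le_add1 le_trans power_increasing power_mono zero_le le_add2 atMost_iff)
  finally show ?thesis by simp
qed

lemma sum_ge_card_UN:
  fixes Q :: nat
  assumes "finite C" and "\<And>c. c \<in> C \<Longrightarrow> finite (W c)" and "\<And>c. c \<in> C \<Longrightarrow> 1 + Q * card (W c) \<le> f c"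
  shows "card C + Q * card (\<Union>c\<in>C. W c) \<le> (\<Sum>c\<in>C. f c)"
proof -
  have "Q * card (\<Union>c\<in>C. W c) \<le> Q * (\<Sum>c\<in>C. card (W c))"
    using card_UN_le[OF assms(1)] by (rule mult_le_mono2)
  also have "card C + \<dots> = (\<Sum>c\<in>C. 1 + Q * card (W c))"
    by (simp only: sum.distrib sum_distrib_left) simp
  also have "\<dots> \<le> (\<Sum>c\<in>C. f c)" using assms(3) by (rule sum_mono)
  finally show ?thesis by simp
qed

lemma sum_ge_card_UN_strict:
  fixes Q :: nat
  assumes "finite C" and "b \<in> C" and "W b \<subseteq> (\<Union>c\<in>C - {b}. W c)"
    and "\<And>c. c \<in> C \<Longrightarrow> finite (W c)" and "\<And>c. c \<in> C \<Longrightarrow> 1 + Q * card (W c) \<le> f c"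
    and "2 \<le> f b"
  shows "card C + Q * card (\<Union>c\<in>C. W c) + 1 \<le> (\<Sum>c\<in>C. f c)"
proof -
  have "card (C - {b}) + Q * card (\<Union>c\<in>C - {b}. W c) \<le> (\<Sum>c\<in>C - {b}. f c)"
    using assms(1,4,5) by (intro sum_ge_card_UN) auto
  moreover have "(\<Union>c\<in>C. W c) = (\<Union>c\<in>C - {b}. W c)" using assms(2,3) by blast
  moreover have "(\<Sum>c\<in>C. f c) = f b + (\<Sum>c\<in>C - {b}. f c)"
    using assms(1,2) by (simp add: sum.remove)
  moreover have "card C = Suc (card (C - {b}))" using assms(1,2) by (rule card.remove)
  ultimately show ?thesis using assms(6) by simp
qed

lemma card_bound_combine:
  fixes Q :: nat
  assumes "U \<subseteq> insert i (U0 \<union> U1)" and "finite U0" and "finite U1"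
    and "1 + Q * card U0 \<le> b0" and "Q + Q * card U1 + s \<le> b1"
  shows "1 + s + Q * card U \<le> b0 + b1"
proof -
  have "card U \<le> card (insert i (U0 \<union> U1))"
    using assms(1-3) by (intro card_mono) auto
  also have "\<dots> \<le> Suc (card (U0 \<union> U1))"
    using assms(2,3) by (simp add: card_insert_if)
  also have "\<dots> \<le> 1 + card U0 + card U1"
    using card_Un_le[of U0 U1] by simp
  finally have "Q * card U \<le> Q * (1 + card U0 + card U1)"
    by (rule mult_le_mono2)
  then have "Q * card U \<le> Q + Q * card U0 + Q * card U1"
    by (simp add: algebra_simps)
  then show ?thesis using assms(4,5) by linarith
qed

lemma ex1_mem_image_iff:
  assumes inj: "inj_on f B" and sub: "\<And>p. p \<in> B \<Longrightarrow> f p \<subseteq> X"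
  shows "(\<forall>x\<in>X. \<exists>!C. C \<in> f ` B \<and> x \<in> C) \<longleftrightarrow>
      (\<forall>p\<in>B. \<forall>p'\<in>B. p \<noteq> p' \<longrightarrow> f p \<inter> f p' = {}) \<and> \<Union>(f ` B) = X"
proof (intro iffI conjI ballI impI)
  assume unique: "\<forall>x\<in>X. \<exists>!C. C \<in> f ` B \<and> x \<in> C"
  fix p p' assume p: "p \<in> B" "p' \<in> B" "p \<noteq> p'"
  show "f p \<inter> f p' = {}"
  proof (rule equals0I)
    fix x assume x: "x \<in> f p \<inter> f p'"
    then have "x \<in> X" using sub[OF p(1)] by blast
    with unique have ex1: "\<exists>!C. C \<in> f ` B \<and> x \<in> C" by (rule bspec)
    have "f p \<in> f ` B \<and> x \<in> f p" "f p' \<in> f ` B \<and> x \<in> f p'"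
      using x p(1,2) by simp_all
    then have "f p = f p'"
      using the1_equality[OF ex1, of "f p"] the1_equality[OF ex1, of "f p'"] by simp
    then show False using inj_onD[OF inj _ p(1,2)] p(3) by blast
  qed
next
  assume unique: "\<forall>x\<in>X. \<exists>!C. C \<in> f ` B \<and> x \<in> C"
  show "\<Union>(f ` B) = X"
  proof (intro equalityI subsetI)
    fix x assume "x \<in> X"
    with unique have "\<exists>!C. C \<in> f ` B \<and> x \<in> C" by (rule bspec)
    then have "\<exists>C. C \<in> f ` B \<and> x \<in> C" by (rule ex1_implies_ex)
    then show "x \<in> \<Union>(f ` B)" by blast
  qed (use sub in blast)
next
  fix x assume "x \<in> X"
    and disj: "(\<forall>p\<in>B. \<forall>p'\<in>B. p \<noteq> p' \<longrightarrow> f p \<inter> f p' = {}) \<and> \<Union>(f ` B) = X"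
  then obtain p where p: "p \<in> B" "x \<in> f p" by blast
  show "\<exists>!C. C \<in> f ` B \<and> x \<in> C"
  proof (rule ex1I[of _ "f p"])
    show "f p \<in> f ` B \<and> x \<in> f p" using p by blast
    fix C assume "C \<in> f ` B \<and> x \<in> C"
    then obtain p' where p': "p' \<in> B" "C = f p'" "x \<in> f p'" by blast
    have "p' = p"
    proof (rule ccontr)
      assume "p' \<noteq> p"
      then have "f p' \<inter> f p = {}" using disj p'(1) p(1) by blast
      then show False using p'(3) p(2) by blast
    qed
    then show "C = f p" using p'(2) by simp
  qed
qed

definition chunk :: "nat \<Rightarrow> 'a list \<Rightarrow> nat \<Rightarrow> 'a list" where
  "chunk k xs a = take k (drop (a * k) xs)"

lemma length_chunk: "length xs = q * k \<Longrightarrow> a < q \<Longrightarrow> length (chunk k xs a) = k"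
proof -
  assume "length xs = q * k" "a < q"
  moreover have "(a + 1) * k \<le> q * k" using \<open>a < q\<close> by (intro mult_le_mono1) simp
  ultimately show ?thesis unfolding chunk_def by simp
qed

lemma set_chunk_subset: "set (chunk k xs a) \<subseteq> set xs"
  unfolding chunk_def by (rule order_trans[OF set_take_subset set_drop_subset])

lemma distinct_chunk: "distinct xs \<Longrightarrow> distinct (chunk k xs a)"
  unfolding chunk_def by simp

lemma disjoint_chunks:
  assumes "distinct xs" and "a < b"
  shows "set (chunk k xs a) \<inter> set (chunk k xs b) = {}"
proof -
  have "set (chunk k xs a) \<subseteq> set (take (a * k + k) xs)"
    unfolding chunk_def take_add by simp
  moreover have "set (chunk k xs b) \<subseteq> set (drop (b * k) xs)"
    unfolding chunk_def by (rule set_take_subset)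
  moreover have "a * k + k \<le> b * k" using mult_le_mono1[of "a + 1" b k] \<open>a < b\<close> by simp
  ultimately show ?thesis using set_take_disj_set_drop_if_distinct[OF assms(1), of "a * k + k" "b * k"]
    by blast
qed

lemma eq_if_chunks_eq:
  assumes "length xs = q * k" and "length ys = q * k" and "\<And>a. a < q \<Longrightarrow> chunk k xs a = chunk k ys a"
  shows "xs = ys"
proof (rule nth_equalityI)
  show "length xs = length ys" using assms(1,2) by simp
  fix j assume "j < length xs"
  then have "0 < k" using assms(1) by (cases k) simp_all
  then have "j mod k < k" by simp
  have "j div k < q" using \<open>j < length xs\<close> assms(1) by (simp add: less_mult_imp_div_less)
  have "chunk k zs (j div k) ! (j mod k) = zs ! j" if "length zs = q * k" for zs
  proof -
    have "j div k * k \<le> length zs" using \<open>j < length xs\<close> assms(1) that div_times_less_eq_dividend[of j k]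
      by linarith
    then have "chunk k zs (j div k) ! (j mod k) = zs ! (j div k * k + j mod k)"
      unfolding chunk_def using \<open>j mod k < k\<close> by simp
    then show ?thesis by simp
  qed
  then show "xs ! j = ys ! j" using assms \<open>j div k < q\<close> by metis
qed

section \<open>Cubes and partitions into cubes\<close>

locale hypercube =
  fixes q n :: nat
  assumes two_le_q: "2 \<le> q"
begin

lemma mem_hcube_iff: "x \<in> hcube q n \<longleftrightarrow> (\<forall>i<n. x i < q) \<and> (\<forall>i\<ge>n. x i = undefined)"
  unfolding hcube_def PiE_def extensional_def Pi_def by auto

lemma hcube_upd: "x \<in> hcube q n \<Longrightarrow> i < n \<Longrightarrow> v < q \<Longrightarrow> x(i := v) \<in> hcube q n"
  by (auto simp: mem_hcube_iff)

lemma card_hcube: "card (hcube q n) = q ^ n"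
  unfolding hcube_def by (simp add: card_PiE)

lemma finite_hcube: "finite (hcube q n)"
  unfolding hcube_def by (simp add: finite_PiE)

lemma hcube_nonempty: "hcube q n \<noteq> {}"
proof -
  have "0 \<in> {..<q}" using two_le_q by simp
  then show ?thesis unfolding hcube_def by (auto simp: PiE_eq_empty_iff)
qed

text \<open>A subcube is encoded by the partial map assigning their values to its fixed coordinates.\<close>

definition patterns :: "nat set \<Rightarrow> (nat \<rightharpoonup> nat) set" where
  "patterns S = {p. dom p \<subseteq> S \<and> ran p \<subseteq> {..<q}}"

lemma mem_patterns_iff: "p \<in> patterns S \<longleftrightarrow> (\<forall>i v. p i = Some v \<longrightarrow> i \<in> S \<and> v < q)"
  unfolding patterns_def dom_def ran_def by blast

lemma patterns_None: "p \<in> patterns S \<Longrightarrow> i \<notin> S \<Longrightarrow> p i = None"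
  by (cases "p i") (auto simp: mem_patterns_iff)

lemma patterns_Some: "p \<in> patterns S \<Longrightarrow> p i = Some v \<Longrightarrow> i \<in> S \<and> v < q"
  by (simp add: mem_patterns_iff)

lemma patterns_upd_None: "p \<in> patterns S \<Longrightarrow> p(i := None) \<in> patterns S"
  by (simp add: mem_patterns_iff)

lemma finite_dom_pattern: "p \<in> patterns {..<n} \<Longrightarrow> finite (dom p)"
  unfolding patterns_def using finite_subset by blast

lemma card_patterns_le:
  assumes "finite S"
  shows "finite (patterns S)" and "card (patterns S) \<le> (q + 1) ^ card S"
proof -
  let ?T = "PiE S (\<lambda>_. insert None (Some ` {..<q}))"
  have inj: "inj_on (\<lambda>p. restrict p S) (patterns S)"
  proof (rule inj_onI, rule ext)
    fix p p' i assume "p \<in> patterns S" "p' \<in> patterns S" "restrict p S = restrict p' S"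
    then show "p i = p' i" by (cases "i \<in> S") (auto dest: fun_cong[of _ _ i] simp: patterns_None)
  qed
  have sub: "(\<lambda>p. restrict p S) ` patterns S \<subseteq> ?T"
  proof (rule image_subsetI)
    fix p assume "p \<in> patterns S"
    then have "p i \<in> insert None (Some ` {..<q})" for i
      using patterns_Some by (cases "p i") auto
    then show "restrict p S \<in> ?T" by (simp add: restrict_PiE_iff)
  qed
  have fin: "finite ?T" and card: "card ?T = (q + 1) ^ card S"
    using assms by (simp_all add: finite_PiE card_PiE card_insert_if card_image)
  show "finite (patterns S)"
    using finite_imageD[OF finite_subset[OF sub fin] inj] .
  show "card (patterns S) \<le> (q + 1) ^ card S"
    using card_mono[OF fin sub] card_image[OF inj] card by simp
qed

definition cube :: "(nat \<rightharpoonup> nat) \<Rightarrow> (nat \<Rightarrow> nat) set" where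
  "cube p = {x \<in> hcube q n. \<forall>i v. p i = Some v \<longrightarrow> x i = v}"

lemma cube_subset_hcube: "cube p \<subseteq> hcube q n"
  unfolding cube_def by blast

lemma mem_cube_fixed: "x \<in> cube p \<Longrightarrow> p i = Some v \<Longrightarrow> x i = v"
  unfolding cube_def by blast

lemma cube_empty: "cube Map.empty = hcube q n"
  unfolding cube_def by simp

lemma cube_upd:
  assumes "p i = None"
  shows "cube (p(i \<mapsto> a)) = {x \<in> cube p. x i = a}"
  using assms unfolding cube_def by (auto split: if_splits)

lemma cube_upd_None_mono: "cube p \<subseteq> cube (p(i := None))"
  unfolding cube_def by auto

lemma mem_cube_upd_None_iff:
  assumes "x \<in> hcube q n" "i < n" "a < q" "p i \<in> {None, Some a}"
  shows "x \<in> cube (p(i := None)) \<longleftrightarrow> x(i := a) \<in> cube p"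
  using assms hcube_upd[OF assms(1-3)] unfolding cube_def by auto

definition corner :: "(nat \<rightharpoonup> nat) \<Rightarrow> nat \<Rightarrow> nat" where
  "corner p i = (if i < n then case p i of Some v \<Rightarrow> v | None \<Rightarrow> 0 else undefined)"

lemma corner_in_cube: "p \<in> patterns {..<n} \<Longrightarrow> corner p \<in> cube p"
  using two_le_q by (auto simp: cube_def corner_def mem_hcube_iff mem_patterns_iff split: option.split)

lemma cube_nonempty: "p \<in> patterns {..<n} \<Longrightarrow> cube p \<noteq> {}"
  using corner_in_cube by blast

lemma cube_subset_imp_fixed_eq:
  assumes p: "p \<in> patterns {..<n}" and p': "p' \<in> patterns {..<n}"
    and sub: "cube p \<subseteq> cube p'" and "p' i = Some v"
  shows "p i = Some v"
proof (cases "p i")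
  case None
  have i: "i < n" using patterns_Some[OF p'] \<open>p' i = Some v\<close> by blast
  define w where "w = (if v = 0 then 1 else (0::nat))"
  have "w < q" "w \<noteq> v" using two_le_q unfolding w_def by auto
  have "(corner p)(i := w) \<in> cube p"
    using corner_in_cube[OF p] None hcube_upd[OF _ i \<open>w < q\<close>] unfolding cube_def by auto
  then have "((corner p)(i := w)) i = v" using sub \<open>p' i = Some v\<close> unfolding cube_def by blast
  then show ?thesis using \<open>w \<noteq> v\<close> by simp
next
  case (Some u)
  then show ?thesis using corner_in_cube[OF p] sub \<open>p' i = Some v\<close> unfolding cube_def by blast
qed

lemma inj_on_cube: "inj_on cube (patterns {..<n})"
proof (rule inj_onI, rule ext)
  fix p p' i assume p: "p \<in> patterns {..<n}" and p': "p' \<in> patterns {..<n}" and eq: "cube p = cube p'"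
  have "p i = Some v" if "p' i = Some v" for v
    using cube_subset_imp_fixed_eq[OF p p'] eq that by blast
  moreover have "p' i = Some v" if "p i = Some v" for v
    using cube_subset_imp_fixed_eq[OF p' p] eq that by blast
  ultimately show "p i = p' i" by (cases "p i") (metis not_None_eq, simp)
qed

lemma cube_eq_PiE:
  assumes "p \<in> patterns {..<n}"
  shows "cube p = PiE {..<n} (\<lambda>i. case p i of Some v \<Rightarrow> {v} | None \<Rightarrow> {..<q})"
proof (rule set_eqI)
  fix x
  have "x \<in> cube p \<longleftrightarrow> (\<forall>i\<in>{..<n}. x i \<in> (case p i of Some v \<Rightarrow> {v} | None \<Rightarrow> {..<q}))
        \<and> (\<forall>i. i \<notin> {..<n} \<longrightarrow> x i = undefined)"
    using assms unfolding cube_def mem_hcube_iff mem_patterns_iff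
    by (auto simp: not_less split: option.split)
  then show "x \<in> cube p \<longleftrightarrow> x \<in> PiE {..<n} (\<lambda>i. case p i of Some v \<Rightarrow> {v} | None \<Rightarrow> {..<q})"
    by (simp only: PiE_iff extensional_def mem_Collect_eq)
qed

lemma card_cube:
  assumes p: "p \<in> patterns {..<n}"
  shows "card (cube p) = q ^ (n - card (dom p))"
proof -
  have dom: "dom p \<subseteq> {..<n}" using p unfolding patterns_def by blast
  have "card (cube p) = (\<Prod>i<n. if i \<in> dom p then 1 else q)"
    unfolding cube_eq_PiE[OF p] card_PiE[OF finite_lessThan] by (rule prod.cong) (auto split: option.split)
  also have "\<dots> = (\<Prod>i\<in>{..<n} \<inter> {i. i \<in> dom p}. 1) * (\<Prod>i\<in>{..<n} \<inter> - {i. i \<in> dom p}. q)"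
    by (rule prod.If_cases) simp
  also have "\<dots> = q ^ card ({..<n} - dom p)"
    by (simp add: Diff_eq)
  also have "card ({..<n} - dom p) = n - card (dom p)"
    using dom by (simp add: card_Diff_subset finite_subset)
  finally show ?thesis .
qed

definition cube_partition :: "(nat \<rightharpoonup> nat) set \<Rightarrow> (nat \<Rightarrow> nat) set \<Rightarrow> bool" where
  "cube_partition B R \<longleftrightarrow> B \<subseteq> patterns {..<n}
     \<and> (\<forall>p\<in>B. \<forall>p'\<in>B. p \<noteq> p' \<longrightarrow> cube p \<inter> cube p' = {}) \<and> \<Union>(cube ` B) = R"

definition support :: "(nat \<rightharpoonup> nat) set \<Rightarrow> nat set" where
  "support B = \<Union>(dom ` B)"

lemma cube_partition_patterns: "cube_partition B R \<Longrightarrow> p \<in> B \<Longrightarrow> p \<in> patterns {..<n}"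
  unfolding cube_partition_def by blast

lemma cube_partition_unique:
  "cube_partition B R \<Longrightarrow> p \<in> B \<Longrightarrow> p' \<in> B \<Longrightarrow> x \<in> cube p \<Longrightarrow> x \<in> cube p' \<Longrightarrow> p = p'"
  unfolding cube_partition_def by blast

lemma cube_partition_cover: "cube_partition B R \<Longrightarrow> x \<in> R \<longleftrightarrow> (\<exists>p\<in>B. x \<in> cube p)"
  unfolding cube_partition_def by blast

lemma cube_partition_subset_hcube: "cube_partition B R \<Longrightarrow> R \<subseteq> hcube q n"
  unfolding cube_partition_def using cube_subset_hcube by blast

lemma cube_partition_nonempty: "cube_partition B R \<Longrightarrow> R \<noteq> {} \<Longrightarrow> B \<noteq> {}"
  unfolding cube_partition_def by blast

lemma finite_cube_partition: "cube_partition B R \<Longrightarrow> finite B"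
  unfolding cube_partition_def using card_patterns_le(1)[of "{..<n}"] finite_subset by blast

lemma cube_partition_subset: "cube_partition B R \<Longrightarrow> B' \<subseteq> B \<Longrightarrow> cube_partition B' (\<Union>(cube ` B'))"
  unfolding cube_partition_def by blast

lemma cube_partition_trivial: "cube_partition {Map.empty} (hcube q n)"
  unfolding cube_partition_def patterns_def by (simp add: cube_empty)

lemma support_trivial: "support {Map.empty} = {}"
  unfolding support_def by simp

lemma support_subset: "cube_partition B R \<Longrightarrow> support B \<subseteq> {..<n}"
  unfolding support_def cube_partition_def patterns_def by blast

lemma finite_support: "cube_partition B R \<Longrightarrow> finite (support B)"
  using support_subset finite_subset by blast

lemma dom_subset_support: "p \<in> B \<Longrightarrow> dom p \<subseteq> support B"
  unfolding support_def by blast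

lemma support_mono: "B \<subseteq> B' \<Longrightarrow> support B \<subseteq> support B'"
  unfolding support_def by blast

lemma cube_partition_subset_patterns_support:
  "cube_partition B R \<Longrightarrow> B \<subseteq> patterns (support B)"
  using cube_partition_patterns dom_subset_support unfolding patterns_def by blast

section \<open>Splitting a partition along a coordinate\<close>

definition coord_invariant :: "(nat \<Rightarrow> nat) set \<Rightarrow> nat \<Rightarrow> bool" where
  "coord_invariant R i \<longleftrightarrow> (\<forall>x\<in>R. \<forall>v<q. x(i := v) \<in> R)"

lemma coord_invariant_hcube: "i < n \<Longrightarrow> coord_invariant (hcube q n) i"
  unfolding coord_invariant_def using hcube_upd by blast

lemma coord_invariant_if_not_in_support:
  assumes A: "cube_partition A R" and "i \<notin> support A" "i < n"
  shows "coord_invariant R i"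
  unfolding coord_invariant_def
proof (intro ballI allI impI)
  fix x v assume "x \<in> R" "v < q"
  then obtain p where p: "p \<in> A" "x \<in> cube p" using cube_partition_cover[OF A] by blast
  have "p i = None" using \<open>i \<notin> support A\<close> dom_subset_support[OF p(1)] by blast
  then have "x(i := v) \<in> cube p"
    using p(2) hcube_upd[OF _ \<open>i < n\<close> \<open>v < q\<close>] unfolding cube_def by auto
  then show "x(i := v) \<in> R" using cube_partition_cover[OF A] p(1) by blast
qed

definition cubes_with :: "(nat \<rightharpoonup> nat) set \<Rightarrow> nat \<Rightarrow> nat option set \<Rightarrow> (nat \<rightharpoonup> nat) set" where
  "cubes_with B i V = {p \<in> B. p i \<in> V}"

definition slice :: "(nat \<rightharpoonup> nat) set \<Rightarrow> nat \<Rightarrow> nat option set \<Rightarrow> (nat \<rightharpoonup> nat) set" where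
  "slice B i V = (\<lambda>p. p(i := None)) ` cubes_with B i V"

lemma slice_mono: "V \<subseteq> W \<Longrightarrow> slice B i V \<subseteq> slice B i W"
  unfolding slice_def cubes_with_def by blast

lemma upd_None_in_slice: "p \<in> B \<Longrightarrow> p i \<in> V \<Longrightarrow> p(i := None) \<in> slice B i V"
  unfolding slice_def cubes_with_def by blast

lemma support_slice: "support (slice B i V) \<subseteq> support B - {i}"
  unfolding support_def slice_def cubes_with_def by auto

lemma dom_subset_support_slice: "p \<in> B \<Longrightarrow> p i \<in> V \<Longrightarrow> dom p - {i} \<subseteq> support (slice B i V)"
  using dom_subset_support[OF upd_None_in_slice] by fastforce

context
  fixes B R i
  assumes B: "cube_partition B R" and i: "i < n" and inv: "coord_invariant R i"
begin

lemma inj_on_slice: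
  assumes "a < q"
  shows "inj_on (\<lambda>p. p(i := None)) (cubes_with B i {None, Some a})"
proof (rule inj_onI)
  fix p p' assume p: "p \<in> cubes_with B i {None, Some a}" and p': "p' \<in> cubes_with B i {None, Some a}"
    and eq: "p(i := None) = p'(i := None)"
  show "p = p'"
  proof (cases "p i = p' i")
    case True
    have "p = (p(i := None))(i := p i)" "p' = (p'(i := None))(i := p' i)" by simp_all
    then show ?thesis using True eq by metis
  next
    case False
    then have "p i = None \<or> p' i = None" using p p' by (auto simp: cubes_with_def)
    then have "cube p \<subseteq> cube p' \<or> cube p' \<subseteq> cube p"
      using eq cube_upd_None_mono[of p i] cube_upd_None_mono[of p' i] by (metis fun_upd_triv)
    moreover have "p \<in> B" "p' \<in> B" using p p' by (auto simp: cubes_with_def)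
    ultimately show ?thesis
      using corner_in_cube cube_partition_patterns[OF B] cube_partition_unique[OF B] by blast
  qed
qed

lemma cube_partition_slice:
  assumes a: "a < q"
  shows "cube_partition (slice B i {None, Some a}) R"
  unfolding cube_partition_def
proof (intro conjI ballI impI)
  show "slice B i {None, Some a} \<subseteq> patterns {..<n}"
    unfolding slice_def cubes_with_def using cube_partition_patterns[OF B] patterns_upd_None by blast
next
  fix p p' assume "p \<in> slice B i {None, Some a}" "p' \<in> slice B i {None, Some a}" "p \<noteq> p'"
  then obtain r r' where r: "r \<in> B" "r i \<in> {None, Some a}" "p = r(i := None)"
    and r': "r' \<in> B" "r' i \<in> {None, Some a}" "p' = r'(i := None)" and "r \<noteq> r'"
    unfolding slice_def cubes_with_def by blast
  show "cube p \<inter> cube p' = {}"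
  proof (rule ccontr)
    assume "cube p \<inter> cube p' \<noteq> {}"
    then obtain x where "x \<in> cube p" "x \<in> cube p'" by blast
    moreover have x: "x \<in> hcube q n" using \<open>x \<in> cube p\<close> cube_subset_hcube by blast
    ultimately have "x(i := a) \<in> cube r" "x(i := a) \<in> cube r'"
      using mem_cube_upd_None_iff[OF x i a, of r] mem_cube_upd_None_iff[OF x i a, of r'] r r' by simp_all
    then show False using cube_partition_unique[OF B r(1) r'(1)] \<open>r \<noteq> r'\<close> by blast
  qed
next
  show "\<Union>(cube ` slice B i {None, Some a}) = R"
  proof (intro equalityI subsetI)
    fix x assume "x \<in> \<Union>(cube ` slice B i {None, Some a})"
    then obtain r where r: "r \<in> B" "r i \<in> {None, Some a}" "x \<in> cube (r(i := None))"
      unfolding slice_def cubes_with_def by blast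
    have x: "x \<in> hcube q n" using r(3) cube_subset_hcube by blast
    then have "x(i := a) \<in> R"
      using mem_cube_upd_None_iff[OF x i a, of r] r cube_partition_cover[OF B] by blast
    moreover have "x i < q" using x i unfolding mem_hcube_iff by blast
    ultimately have "(x(i := a))(i := x i) \<in> R"
      using inv unfolding coord_invariant_def by blast
    then show "x \<in> R" by simp
  next
    fix x assume "x \<in> R"
    then have x: "x \<in> hcube q n" and "x(i := a) \<in> R"
      using cube_partition_subset_hcube[OF B] inv a unfolding coord_invariant_def by blast+
    then obtain r where r: "r \<in> B" "x(i := a) \<in> cube r" using cube_partition_cover[OF B] by blast
    then have "r i \<in> {None, Some a}" using mem_cube_fixed[of "x(i := a)" r i] by (cases "r i") auto
    then have "x \<in> cube (r(i := None))" "r(i := None) \<in> slice B i {None, Some a}"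
      using mem_cube_upd_None_iff[OF x i a, of r] r upd_None_in_slice[OF r(1)] by simp_all
    then show "x \<in> \<Union>(cube ` slice B i {None, Some a})" by blast
  qed
qed

lemma slice_Some_region_mono:
  assumes a: "a < q" and b: "b < q"
  shows "\<Union>(cube ` slice B i {Some a}) \<subseteq> \<Union>(cube ` slice B i {Some b})"
proof
  fix x assume "x \<in> \<Union>(cube ` slice B i {Some a})"
  then obtain r where r: "r \<in> B" "r i = Some a" "x \<in> cube (r(i := None))"
    unfolding slice_def cubes_with_def by blast
  have x: "x \<in> hcube q n" using r(3) cube_subset_hcube by blast
  have xa: "x(i := a) \<in> cube r" using mem_cube_upd_None_iff[OF x i a] r by simp
  then have "x(i := b) \<in> R"
    using inv b r(1) cube_partition_cover[OF B] unfolding coord_invariant_def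
    by (metis fun_upd_upd)
  then obtain r' where r': "r' \<in> B" "x(i := b) \<in> cube r'" using cube_partition_cover[OF B] by blast
  show "x \<in> \<Union>(cube ` slice B i {Some b})"
  proof (cases "r' i")
    case None
    then have "x(i := a) \<in> cube r'"
      using mem_cube_upd_None_iff[OF x i a, of r'] mem_cube_upd_None_iff[OF x i b, of r'] r'(2) by simp
    then show ?thesis using cube_partition_unique[OF B r(1) r'(1) xa] r(2) None by simp
  next
    case (Some c)
    then have "c = b" using mem_cube_fixed[OF r'(2) Some] by simp
    then show ?thesis
      using mem_cube_upd_None_iff[OF x i b] r' Some upd_None_in_slice[OF r'(1), where V = "{Some b}"] by auto
  qed
qed

lemma slices_partition_common_region:
  assumes "i \<in> support B"
  obtains T where "T \<noteq> {}" and "\<And>a. a < q \<Longrightarrow> cube_partition (slice B i {Some a}) T"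
proof
  let ?T = "\<Union>(cube ` slice B i {Some 0})"
  have q0: "0 < q" using two_le_q by simp
  show "cube_partition (slice B i {Some a}) ?T" if a: "a < q" for a
  proof -
    have "\<Union>(cube ` slice B i {Some a}) = ?T"
      using slice_Some_region_mono[OF a q0] slice_Some_region_mono[OF q0 a] by (rule subset_antisym)
    moreover have "slice B i {Some a} \<subseteq> slice B i {None, Some a}" by (rule slice_mono) blast
    ultimately show ?thesis using cube_partition_subset[OF cube_partition_slice[OF a]] by metis
  qed
  obtain p v where p: "p \<in> B" "p i = Some v" using assms unfolding support_def by blast
  then have "v < q" using cube_partition_patterns[OF B] patterns_Some by blast
  have "cube (p(i := None)) \<noteq> {}"
    using cube_nonempty patterns_upd_None cube_partition_patterns[OF B p(1)] by blast
  then have "\<Union>(cube ` slice B i {Some v}) \<noteq> {}" using upd_None_in_slice[OF p(1)] p(2) by blast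
  then show "?T \<noteq> {}" using slice_Some_region_mono[OF \<open>v < q\<close> q0] by blast
qed

lemma card_slice_Some: "a < q \<Longrightarrow> card (slice B i {Some a}) = card (cubes_with B i {Some a})"
  unfolding slice_def
  by (rule card_image, rule inj_on_subset[OF inj_on_slice]) (auto simp: cubes_with_def)

lemma card_cubes_with:
  assumes "finite V"
  shows "card (cubes_with B i V) = (\<Sum>v\<in>V. card (cubes_with B i {v}))"
proof -
  have "cubes_with B i V = (\<Union>v\<in>V. cubes_with B i {v})" unfolding cubes_with_def by blast
  also have "card \<dots> = (\<Sum>v\<in>V. card (cubes_with B i {v}))"
    by (rule card_UN_disjoint) (use assms finite_cube_partition[OF B] in \<open>auto simp: cubes_with_def\<close>)
  finally show ?thesis .
qed

lemma card_slice_None_Some: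
  "a < q \<Longrightarrow> card (slice B i {None, Some a}) = card (cubes_with B i {None}) + card (cubes_with B i {Some a})"
  unfolding slice_def by (simp add: card_image[OF inj_on_slice] card_cubes_with[of "{None, Some a}"])

lemma card_eq_sum_slices:
  assumes a: "a < q"
  shows "card B = card (slice B i {None, Some a}) + (\<Sum>c\<in>{..<q} - {a}. card (slice B i {Some c}))"
proof -
  have "p i \<in> insert None (Some ` {..<q})" if "p \<in> B" for p
    using patterns_Some[OF cube_partition_patterns[OF B that]] by (cases "p i") auto
  then have "B = cubes_with B i (insert None (Some ` {..<q}))" unfolding cubes_with_def by blast
  also have "card \<dots> = card (cubes_with B i {None}) + (\<Sum>c<q. card (cubes_with B i {Some c}))"
    by (simp add: card_cubes_with[of "insert None (Some ` {..<q})"] sum.reindex)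
  also have "(\<Sum>c<q. card (cubes_with B i {Some c}))
      = card (cubes_with B i {Some a}) + (\<Sum>c\<in>{..<q} - {a}. card (slice B i {Some c}))"
    using a by (simp add: sum.remove card_slice_Some)
  finally show ?thesis using card_slice_None_Some[OF a] by simp
qed

lemma support_subset_slices:
  assumes "a < q"
  shows "support B \<subseteq> insert i (support (slice B i {None, Some a})
           \<union> (\<Union>c\<in>{..<q} - {a}. support (slice B i {Some c})))"
proof
  fix k assume "k \<in> support B"
  then obtain p where p: "p \<in> B" "k \<in> dom p" unfolding support_def by blast
  show "k \<in> insert i (support (slice B i {None, Some a})
           \<union> (\<Union>c\<in>{..<q} - {a}. support (slice B i {Some c})))"
  proof (cases "p i \<in> {None, Some a}")
    case True
    then show ?thesis using dom_subset_support_slice[OF p(1) True] p(2) by blast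
  next
    case False
    then obtain c where c: "p i = Some c" "c \<noteq> a" by auto
    then have "c \<in> {..<q} - {a}"
      using patterns_Some[OF cube_partition_patterns[OF B p(1)]] by simp
    moreover have "p i \<in> {Some c}" using c by simp
    ultimately show ?thesis using dom_subset_support_slice[OF p(1)] p(2) by blast
  qed
qed

lemma cubes_with_Some_nonempty:
  assumes "i \<in> support B" "a < q"
  shows "cubes_with B i {Some a} \<noteq> {}"
proof -
  obtain T where "T \<noteq> {}" "cube_partition (slice B i {Some a}) T"
    using slices_partition_common_region[OF assms(1)] assms(2) by metis
  then show ?thesis using cube_partition_nonempty unfolding slice_def by blast
qed

end

section \<open>Lower bounds for the number of cubes\<close>

theorem card_ge_support_diff:
  assumes "cube_partition A R" and "cube_partition B R" and "R \<noteq> {}"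
  shows "1 + (q - 1) * card (support B - support A) \<le> card B"
  using assms
proof (induction "card (support B)" arbitrary: A B R rule: less_induct)
  case less
  note A = less.prems(1) and B = less.prems(2)
  show ?case
  proof (cases "support B \<subseteq> support A")
    case True
    then have "card (support B - support A) = 0" by (metis Diff_eq_empty_iff card.empty)
    then show ?thesis
      using finite_cube_partition[OF B] cube_partition_nonempty[OF B less.prems(3)]
      by (simp add: Suc_le_eq card_gt_0_iff)
  next
    case False
    then obtain i where iB: "i \<in> support B" and iA: "i \<notin> support A" by blast
    have i: "i < n" using iB support_subset[OF B] by blast
    have inv: "coord_invariant R i" by (rule coord_invariant_if_not_in_support[OF A iA i])
    have q0: "0 < q" using two_le_q by simp
    define B0 where "B0 = slice B i {None, Some 0}"
    define F where "F c = slice B i {Some c}" for c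
    define C where "C = {..<q} - {0}"
    obtain T where "T \<noteq> {}" and T: "\<And>c. c < q \<Longrightarrow> cube_partition (F c) T"
      using slices_partition_common_region[OF B i inv iB] unfolding F_def by blast
    have smaller: "card (support (slice B i V)) < card (support B)" for V
      using psubset_card_mono[OF finite_support[OF B]] support_slice[of B i V] iB by blast
    let ?U0 = "support B0 - support A" and ?U1 = "\<Union>c\<in>C. support (F c) - support (F 0)"
    have "1 + (q - 1) * card ?U0 \<le> card B0"
      using less.hyps[OF smaller A cube_partition_slice[OF B i inv q0] less.prems(3)]
      unfolding B0_def by simp
    moreover
    have "1 + (q - 1) * card (support (F c) - support (F 0)) \<le> card (F c)" if "c \<in> C" for c
    proof -
      have "c < q" using that unfolding C_def by simp
      then show ?thesis
        using less.hyps[OF _ T[OF q0] T[OF \<open>c < q\<close>] \<open>T \<noteq> {}\<close>] smaller unfolding F_def by blast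
    qed
    then have "card C + (q - 1) * card ?U1 \<le> (\<Sum>c\<in>C. card (F c))"
      using finite_support[OF T] unfolding C_def by (intro sum_ge_card_UN) auto
    then have "(q - 1) + (q - 1) * card ?U1 + 0 \<le> (\<Sum>c\<in>C. card (F c))"
      using q0 unfolding C_def by simp
    moreover have "support (F 0) \<subseteq> support B0"
      unfolding F_def B0_def by (intro support_mono slice_mono) blast
    then have "support B - support A \<subseteq> insert i (?U0 \<union> ?U1)"
      using support_subset_slices[OF B i inv q0] unfolding B0_def F_def C_def by blast
    moreover have "finite ?U0" "finite ?U1"
      using finite_support[OF T] finite_support[OF cube_partition_slice[OF B i inv q0]]
      unfolding B0_def C_def by auto
    ultimately have "1 + 0 + (q - 1) * card (support B - support A) \<le> card B0 + (\<Sum>c\<in>C. card (F c))"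
      by (intro card_bound_combine)
    also have "\<dots> = card B"
      unfolding B0_def F_def C_def by (rule card_eq_sum_slices[OF B i inv q0, symmetric])
    finally show ?thesis by simp
  qed
qed

lemma cubes_fixing_subset_cubes_with:
  assumes B: "B \<subseteq> patterns {..<n}" and "k \<noteq> i" and "k \<notin> support (slice B i {None, Some a})"
    and others: "\<And>c. c < q \<Longrightarrow> c \<noteq> a \<Longrightarrow> c \<noteq> b \<Longrightarrow> k \<notin> support (slice B i {Some c})"
  shows "{p \<in> B. k \<in> dom p} \<subseteq> cubes_with B i {Some b}"
proof
  fix p assume "p \<in> {p \<in> B. k \<in> dom p}"
  then have p: "p \<in> B" "k \<in> dom p - {i}" using \<open>k \<noteq> i\<close> by auto
  have "p i \<notin> {None, Some a}"
  proof
    assume "p i \<in> {None, Some a}"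
    from subsetD[OF dom_subset_support_slice[OF p(1) this] p(2)] assms(3) show False by contradiction
  qed
  then obtain c where c: "p i = Some c" "c \<noteq> a" by auto
  have "c < q" using patterns_Some[OF subsetD[OF B p(1)] c(1)] by simp
  have "p i \<in> {Some c}" using c(1) by simp
  from subsetD[OF dom_subset_support_slice[OF p(1) this] p(2)] have "c = b"
    using others[OF \<open>c < q\<close> c(2)] by blast
  then show "p \<in> cubes_with B i {Some b}" using p(1) c(1) unfolding cubes_with_def by simp
qed

lemma support_slice_Some_subset_others:
  assumes P: "cube_partition P (hcube q n)" and iP: "i \<in> support P"
    and min: "\<And>j. j \<in> support P \<Longrightarrow> card {p \<in> P. i \<in> dom p} \<le> card {p \<in> P. j \<in> dom p}"
    and a: "a < q" "a \<noteq> b"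
  defines "W \<equiv> \<lambda>c. support (slice P i {Some c}) - support (slice P i {None, Some a})"
  shows "W b \<subseteq> (\<Union>c\<in>{..<q} - {a, b}. W c)"
proof
  have i: "i < n" using iP support_subset[OF P] by blast
  have P_patterns: "P \<subseteq> patterns {..<n}" using cube_partition_patterns[OF P] by blast
  fix k assume k: "k \<in> W b"
  \<comment> \<open>Otherwise only cubes of the b-layer fix k, so k would be fixed by fewer cubes than i.\<close>
  show "k \<in> (\<Union>c\<in>{..<q} - {a, b}. W c)"
  proof (rule ccontr)
    assume k_others: "k \<notin> (\<Union>c\<in>{..<q} - {a, b}. W c)"
    have k_slices: "k \<notin> support (slice P i {None, Some a})" "k \<noteq> i" "k \<in> support P"
      using k support_slice[of P i "{Some b}"] unfolding W_def by auto
    have "k \<notin> support (slice P i {Some c})" if "c < q" "c \<noteq> a" "c \<noteq> b" for c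
      using k_others that k_slices(1) unfolding W_def by blast
    then have "{p \<in> P. k \<in> dom p} \<subseteq> cubes_with P i {Some b}"
      by (rule cubes_fixing_subset_cubes_with[OF P_patterns k_slices(2,1)])
    moreover obtain r where "r \<in> cubes_with P i {Some a}"
      using cubes_with_Some_nonempty[OF P i coord_invariant_hcube[OF i] iP a(1)] by blast
    then have "r \<in> {p \<in> P. i \<in> dom p} - cubes_with P i {Some b}"
      using a(2) unfolding cubes_with_def by auto
    then have "cubes_with P i {Some b} \<subset> {p \<in> P. i \<in> dom p}"
      unfolding cubes_with_def by blast
    moreover have "finite {p \<in> P. i \<in> dom p}" using finite_cube_partition[OF P] by simp
    ultimately have "card {p \<in> P. k \<in> dom p} < card {p \<in> P. i \<in> dom p}"
      by (meson card_mono psubset_card_mono finite_subset less_imp_le le_less_trans)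
    then show False using min[OF k_slices(3)] by simp
  qed
qed

lemma card_ge_support_large_fibre:
  assumes P: "cube_partition P (hcube q n)" and iP: "i \<in> support P"
    and min: "\<And>j. j \<in> support P \<Longrightarrow> card {p \<in> P. i \<in> dom p} \<le> card {p \<in> P. j \<in> dom p}"
    and b: "b < q" and two: "2 \<le> card (cubes_with P i {Some b})"
  shows "2 + (q - 1) * card (support P) \<le> card P"
proof -
  have i: "i < n" using iP support_subset[OF P] by blast
  have inv: "coord_invariant (hcube q n) i" by (rule coord_invariant_hcube[OF i])
  define a where "a = (if b = 0 then 1 else (0::nat))"
  have a: "a < q" "a \<noteq> b" using two_le_q b unfolding a_def by auto
  define Bs where "Bs = slice P i {None, Some a}"
  define F where "F c = slice P i {Some c}" for c
  define C where "C = {..<q} - {a}"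
  define W where "W c = support (F c) - support Bs" for c
  have Bs: "cube_partition Bs (hcube q n)" unfolding Bs_def by (rule cube_partition_slice[OF P i inv a(1)])
  obtain T where "T \<noteq> {}" and T: "\<And>c. c < q \<Longrightarrow> cube_partition (F c) T"
    using slices_partition_common_region[OF P i inv iP] unfolding F_def by blast
  have card_Bs: "1 + (q - 1) * card (support Bs) \<le> card Bs"
    using card_ge_support_diff[OF cube_partition_trivial Bs hcube_nonempty] by (simp add: support_trivial)
  have card_W: "1 + (q - 1) * card (W c) \<le> card (F c)" if "c \<in> C" for c
  proof -
    have "c < q" using that unfolding C_def by simp
    have "support (F a) \<subseteq> support Bs" unfolding F_def Bs_def by (intro support_mono slice_mono) blast
    then have "card (W c) \<le> card (support (F c) - support (F a))"
      unfolding W_def using finite_support[OF T[OF \<open>c < q\<close>]] by (intro card_mono) auto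
    then have "(q - 1) * card (W c) \<le> (q - 1) * card (support (F c) - support (F a))"
      by (rule mult_le_mono2)
    then show ?thesis
      using card_ge_support_diff[OF T[OF a(1)] T[OF \<open>c < q\<close>] \<open>T \<noteq> {}\<close>] by linarith
  qed
  have "C - {b} = {..<q} - {a, b}" unfolding C_def by blast
  then have "W b \<subseteq> (\<Union>c\<in>C - {b}. W c)"
    using support_slice_Some_subset_others[OF P iP min a] unfolding W_def F_def Bs_def by simp
  then have "card C + (q - 1) * card (\<Union>c\<in>C. W c) + 1 \<le> (\<Sum>c\<in>C. card (F c))"
    using card_W finite_support[OF T] two card_slice_Some[OF P i inv b] a b
    unfolding C_def W_def F_def by (intro sum_ge_card_UN_strict) auto
  moreover have "card C = q - 1" using a(1) unfolding C_def by simp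
  moreover have "support P \<subseteq> insert i (support Bs \<union> (\<Union>c\<in>C. W c))"
    using support_subset_slices[OF P i inv a(1)] unfolding Bs_def W_def F_def C_def by blast
  moreover have "finite (support Bs)" "finite (\<Union>c\<in>C. W c)"
    using finite_support[OF Bs] finite_support[OF T] unfolding C_def W_def by auto
  ultimately have "1 + 1 + (q - 1) * card (support P) \<le> card Bs + (\<Sum>c\<in>C. card (F c))"
    using card_Bs by (intro card_bound_combine) auto
  also have "\<dots> = card P"
    unfolding Bs_def F_def C_def by (rule card_eq_sum_slices[OF P i inv a(1), symmetric])
  finally show ?thesis by simp
qed

lemma slices_eq_if_singleton_fibres:
  assumes P: "cube_partition P (hcube q n)" and iP: "i \<in> support P"
    and single: "\<And>c. c < q \<Longrightarrow> card (cubes_with P i {Some c}) = 1"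
    and "c < q" and "c' < q"
  shows "slice P i {Some c} = slice P i {Some c'}"
proof -
  have i: "i < n" using iP support_subset[OF P] by blast
  have inv: "coord_invariant (hcube q n) i" by (rule coord_invariant_hcube[OF i])
  obtain T where T: "\<And>c. c < q \<Longrightarrow> cube_partition (slice P i {Some c}) T"
    using slices_partition_common_region[OF P i inv iP] by blast
  have "\<exists>K. slice P i {Some c} = {K} \<and> K \<in> patterns {..<n} \<and> cube K = T" if c: "c < q" for c
  proof -
    obtain K where "slice P i {Some c} = {K}"
      using single[OF c] card_slice_Some[OF P i inv c] card_1_singletonE by metis
    then show ?thesis using T[OF c] unfolding cube_partition_def by auto
  qed
  then obtain K K' where "slice P i {Some c} = {K}" "K \<in> patterns {..<n}" "cube K = T"
    and "slice P i {Some c'} = {K'}" "K' \<in> patterns {..<n}" "cube K' = T"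
    using \<open>c < q\<close> \<open>c' < q\<close> by metis
  then show ?thesis using inj_on_cube by (metis inj_onD)
qed

lemma upd_None_in_merged_slice:
  assumes P: "cube_partition P (hcube q n)" and iP: "i \<in> support P"
    and single: "\<And>c. c < q \<Longrightarrow> card (cubes_with P i {Some c}) = 1" and p: "p \<in> P"
  shows "p(i := None) \<in> slice P i {None, Some 0}"
proof (cases "p i \<in> {None, Some 0}")
  case True
  then show ?thesis by (rule upd_None_in_slice[OF p])
next
  case False
  then obtain c where c: "p i = Some c" by auto
  then have "c < q" using patterns_Some[OF cube_partition_patterns[OF P p]] by simp
  have "p(i := None) \<in> slice P i {Some c}" using upd_None_in_slice[OF p] c by simp
  also have "slice P i {Some c} = slice P i {Some 0}"
    using slices_eq_if_singleton_fibres[OF P iP single \<open>c < q\<close>] two_le_q by simp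
  also have "\<dots> \<subseteq> slice P i {None, Some 0}" by (rule slice_mono) blast
  finally show ?thesis .
qed

lemma merge_singleton_fibres:
  assumes P: "cube_partition P (hcube q n)" and iP: "i \<in> support P"
    and single: "\<And>c. c < q \<Longrightarrow> card (cubes_with P i {Some c}) = 1"
    and no_common: "\<Inter>(dom ` P) = {}"
  defines "P' \<equiv> slice P i {None, Some 0}"
  shows "card P = card P' + (q - 1)" and "card (support P) \<le> card (support P') + 1"
    and "\<Inter>(dom ` P') = {}" and "support P' \<noteq> {}"
proof -
  have i: "i < n" using iP support_subset[OF P] by blast
  have inv: "coord_invariant (hcube q n) i" by (rule coord_invariant_hcube[OF i])
  have q0: "0 < q" using two_le_q by simp
  have merged: "p(i := None) \<in> P'" if "p \<in> P" for p
    unfolding P'_def by (rule upd_None_in_merged_slice[OF P iP single that])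
  have "(\<Sum>c\<in>{..<q} - {0}. card (slice P i {Some c})) = (\<Sum>c\<in>{..<q} - {0}. 1)"
    by (rule sum.cong) (simp_all add: card_slice_Some[OF P i inv] single)
  then show "card P = card P' + (q - 1)"
    using card_eq_sum_slices[OF P i inv q0] q0 unfolding P'_def by (simp add: card_Diff_singleton)
  have "support P \<subseteq> insert i (support P')"
  proof
    fix k assume "k \<in> support P"
    then obtain p where "p \<in> P" "k \<in> dom p" unfolding support_def by blast
    then have "k = i \<or> k \<in> dom (p(i := None))" by simp
    then show "k \<in> insert i (support P')" using dom_subset_support[OF merged[OF \<open>p \<in> P\<close>]] by blast
  qed
  moreover have "finite (support P')"
    using finite_support[OF cube_partition_slice[OF P i inv q0]] unfolding P'_def .
  ultimately have "card (support P) \<le> card (insert i (support P'))" by (intro card_mono) auto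
  then show "card (support P) \<le> card (support P') + 1"
    using \<open>finite (support P')\<close> by (simp add: card_insert_if split: if_splits)
  show "\<Inter>(dom ` P') = {}"
  proof (intro equals0I)
    fix j assume j: "j \<in> \<Inter>(dom ` P')"
    obtain p where "p \<in> P" "j \<notin> dom p" using no_common by blast
    then have "j \<in> dom (p(i := None))" using j merged[OF \<open>p \<in> P\<close>] by blast
    then show False using \<open>j \<notin> dom p\<close> by (simp split: if_splits)
  qed
  show "support P' \<noteq> {}"
  proof
    assume "support P' = {}"
    then have "P' \<subseteq> {Map.empty}" unfolding support_def by auto
    then have "card P' \<le> card {Map.empty :: nat \<rightharpoonup> nat}" by (intro card_mono) simp_all
    moreover have "card P' = card (cubes_with P i {None}) + 1"
      using card_slice_None_Some[OF P i inv q0] single[OF q0] unfolding P'_def by simp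
    ultimately have "cubes_with P i {None} = {}"
      using finite_cube_partition[OF P] unfolding cubes_with_def by simp
    then have "i \<in> \<Inter>(dom ` P)" unfolding cubes_with_def by auto
    then show False using no_common by simp
  qed
qed

theorem card_ge_support_if_no_common_coord:
  assumes "cube_partition P (hcube q n)" and "support P \<noteq> {}" and "\<Inter>(dom ` P) = {}"
  shows "2 + (q - 1) * card (support P) \<le> card P"
  using assms
proof (induction "card P" arbitrary: P rule: less_induct)
  case less
  note P = less.prems(1)
  obtain i where iP: "i \<in> support P"
    and min: "\<And>j. j \<in> support P \<Longrightarrow> card {p \<in> P. i \<in> dom p} \<le> card {p \<in> P. j \<in> dom p}"
    using ex_has_least_nat[of "\<lambda>j. j \<in> support P" _ "\<lambda>j. card {p \<in> P. j \<in> dom p}"] less.prems(2)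
    by blast
  have i: "i < n" using iP support_subset[OF P] by blast
  have inv: "coord_invariant (hcube q n) i" by (rule coord_invariant_hcube[OF i])
  show ?case
  proof (cases "\<exists>b<q. 2 \<le> card (cubes_with P i {Some b})")
    case True
    then show ?thesis using card_ge_support_large_fibre[OF P iP min] by blast
  next
    case False
    have single: "card (cubes_with P i {Some c}) = 1" if "c < q" for c
    proof -
      have "card (cubes_with P i {Some c}) \<noteq> 0"
        using cubes_with_Some_nonempty[OF P i inv iP that] finite_cube_partition[OF P]
        unfolding cubes_with_def by simp
      then show ?thesis using False that by fastforce
    qed
    define P' where "P' = slice P i {None, Some 0}"
    have q0: "0 < q" using two_le_q by simp
    note merge = merge_singleton_fibres[OF P iP single less.prems(3), folded P'_def]
    have "2 + (q - 1) * card (support P') \<le> card P'"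
      using less.hyps[OF _ cube_partition_slice[OF P i inv q0, folded P'_def] merge(4,3)] merge(1) two_le_q
      by simp
    moreover have "(q - 1) * card (support P) \<le> (q - 1) * card (support P') + (q - 1)"
      using mult_le_mono2[OF merge(2), of "q - 1"] by simp
    ultimately show ?thesis using merge(1) by linarith
  qed
qed

section \<open>Counting partitions into cubes of equal codimension\<close>

lemma sum_card_cube_partition:
  assumes B: "cube_partition B (hcube q n)"
  shows "(\<Sum>p\<in>B. card (cube p)) = q ^ n"
proof -
  have "(\<Sum>p\<in>B. card (cube p)) = card (\<Union>(cube ` B))"
    using B finite_cube_partition[OF B] finite_subset[OF cube_subset_hcube finite_hcube]
    unfolding cube_partition_def by (intro card_UN_disjoint[symmetric]) auto
  then show ?thesis using B card_hcube unfolding cube_partition_def by simp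
qed

definition codim_partitions :: "nat \<Rightarrow> (nat \<rightharpoonup> nat) set set" where
  "codim_partitions m = {B. cube_partition B (hcube q n) \<and> (\<forall>p\<in>B. card (dom p) = m)}"

lemma codim_partition_nonempty: "B \<in> codim_partitions m \<Longrightarrow> B \<noteq> {}"
  unfolding codim_partitions_def using cube_partition_nonempty hcube_nonempty by blast

lemma finite_codim_partitions: "finite (codim_partitions m)"
proof -
  have "codim_partitions m \<subseteq> Pow (patterns {..<n})"
    unfolding codim_partitions_def cube_partition_def by blast
  then show ?thesis using card_patterns_le(1)[of "{..<n}"] finite_subset by blast
qed

lemma card_codim_partition:
  assumes "B \<in> codim_partitions m"
  shows "card B = q ^ m"
proof -
  have B: "cube_partition B (hcube q n)" and dom: "\<And>p. p \<in> B \<Longrightarrow> card (dom p) = m"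
    using assms unfolding codim_partitions_def by auto
  obtain p0 where p0: "p0 \<in> B" using cube_partition_nonempty[OF B hcube_nonempty] by blast
  have "m = card (dom p0)" using dom[OF p0] by simp
  also have "\<dots> \<le> card {..<n}"
    using dom_subset_support[OF p0] support_subset[OF B] by (intro card_mono) auto
  finally have "m \<le> n" by simp
  have "(\<Sum>p\<in>B. card (cube p)) = (\<Sum>p\<in>B. q ^ (n - m))"
    by (rule sum.cong) (simp_all add: card_cube cube_partition_patterns[OF B] dom)
  then have "card B * q ^ (n - m) = q ^ m * q ^ (n - m)"
    using sum_card_cube_partition[OF B] \<open>m \<le> n\<close> by (simp flip: power_add)
  then show ?thesis using two_le_q by simp
qed

lemma codim_partitions_0: "codim_partitions 0 = {{Map.empty}}"
proof -
  have "B = {Map.empty}" if "B \<in> codim_partitions 0" for B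
  proof -
    have B: "cube_partition B (hcube q n)" and "\<And>p. p \<in> B \<Longrightarrow> card (dom p) = 0"
      using that unfolding codim_partitions_def by auto
    then have "p = Map.empty" if "p \<in> B" for p
      using that finite_dom_pattern[OF cube_partition_patterns[OF B]] by fastforce
    moreover have "card B = 1" using card_codim_partition[OF that] by simp
    ultimately show ?thesis by (metis card_1_singletonE singletonI)
  qed
  moreover have "{Map.empty} \<in> codim_partitions 0"
    unfolding codim_partitions_def using cube_partition_trivial by simp
  ultimately show ?thesis by blast
qed

definition stack :: "nat \<Rightarrow> (nat \<Rightarrow> (nat \<rightharpoonup> nat) set) \<Rightarrow> (nat \<rightharpoonup> nat) set" where
  "stack i f = (\<Union>a<q. (\<lambda>p. p(i \<mapsto> a)) ` f a)"

lemma i_in_dom_stack: "p \<in> stack i f \<Longrightarrow> i \<in> dom p"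
  unfolding stack_def by auto

lemma support_stack: "support (stack i f) \<subseteq> insert i (\<Union>a<q. support (f a))"
  unfolding support_def stack_def by auto

lemma dom_in_common_coord_stack:
  assumes "j \<in> \<Inter>(dom ` stack i f)" and "j \<noteq> i" and "a < q" and "p \<in> f a"
  shows "j \<in> dom p"
proof -
  have "p(i \<mapsto> a) \<in> stack i f" using assms(3,4) unfolding stack_def by blast
  then show ?thesis using assms(1,2) by auto
qed

lemma slice_stack:
  assumes "a < q" and "i \<notin> support (f a)"
  shows "slice (stack i f) i {Some a} = f a"
proof -
  have "cubes_with (stack i f) i {Some a} = (\<lambda>p. p(i \<mapsto> a)) ` f a"
    using assms(1) unfolding cubes_with_def stack_def by auto
  then have "slice (stack i f) i {Some a} = (\<lambda>p. (p(i \<mapsto> a))(i := None)) ` f a"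
    unfolding slice_def by (simp add: image_image)
  also have "\<dots> = (\<lambda>p. p) ` f a"
  proof (rule image_cong)
    fix p assume "p \<in> f a"
    then have "p i = None" using assms(2) dom_subset_support[of p "f a"] by blast
    then show "(p(i \<mapsto> a))(i := None) = p" by (simp add: fun_upd_idem)
  qed simp
  finally show ?thesis by simp
qed

lemma stack_slices:
  assumes "B \<subseteq> patterns {..<n}" and "\<forall>p\<in>B. i \<in> dom p"
  shows "stack i (\<lambda>a. slice B i {Some a}) = B"
proof (intro equalityI subsetI)
  fix p assume "p \<in> stack i (\<lambda>a. slice B i {Some a})"
  then obtain a r where "r \<in> B" "r i = Some a" "p = (r(i := None))(i \<mapsto> a)"
    unfolding stack_def slice_def cubes_with_def by auto
  then show "p \<in> B" by (simp add: fun_upd_idem)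
next
  fix p assume p: "p \<in> B"
  then obtain a where a: "p i = Some a" using assms(2) by blast
  then have "a < q" using patterns_Some assms(1) p by blast
  moreover have "p = (p(i := None))(i \<mapsto> a)" using a by (simp add: fun_upd_idem)
  moreover have "p(i := None) \<in> slice B i {Some a}" using upd_None_in_slice[OF p] a by simp
  ultimately show "p \<in> stack i (\<lambda>a. slice B i {Some a})" unfolding stack_def by blast
qed

lemma slice_in_codim_partitions:
  assumes B: "B \<in> codim_partitions (Suc m)" and i: "i < n" and "\<forall>p\<in>B. i \<in> dom p" and "a < q"
  shows "slice B i {Some a} \<in> codim_partitions m"
proof -
  have BX: "cube_partition B (hcube q n)" using B unfolding codim_partitions_def by blast
  have "slice B i {None, Some a} = slice B i {Some a}"
    using assms(3) unfolding slice_def cubes_with_def by auto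
  then have "cube_partition (slice B i {Some a}) (hcube q n)"
    using cube_partition_slice[OF BX i coord_invariant_hcube[OF i] \<open>a < q\<close>] by simp
  moreover have "card (dom (p(i := None))) = m" if "p \<in> B" "p i = Some a" for p
    using that B finite_dom_pattern[OF cube_partition_patterns[OF BX \<open>p \<in> B\<close>]]
    unfolding codim_partitions_def by (simp add: domI)
  ultimately show ?thesis unfolding codim_partitions_def slice_def cubes_with_def by auto
qed

lemma stack_in_codim_partitions:
  assumes i: "i < n" and f: "\<And>a. a < q \<Longrightarrow> f a \<in> codim_partitions m"
    and fresh: "\<And>a. a < q \<Longrightarrow> i \<notin> support (f a)"
  shows "stack i f \<in> codim_partitions (Suc m)"
proof -
  have fX: "cube_partition (f a) (hcube q n)" if "a < q" for a
    using f[OF that] unfolding codim_partitions_def by blast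
  have None: "p i = None" if "a < q" "p \<in> f a" for a p
    using fresh[OF that(1)] dom_subset_support[OF that(2)] by blast
  have mem: "r \<in> stack i f \<longleftrightarrow> (\<exists>a<q. \<exists>p\<in>f a. r = p(i \<mapsto> a))" for r
    unfolding stack_def by blast
  have cube_stack: "cube (p(i \<mapsto> a)) = {x \<in> cube p. x i = a}" if "a < q" "p \<in> f a" for a p
    using cube_upd[of p i a, OF None[OF that]] .
  have "p(i \<mapsto> a) \<in> patterns {..<n}" if "a < q" "p \<in> f a" for a p
    using i that patterns_Some[OF cube_partition_patterns[OF fX[OF that(1)] that(2)]]
    unfolding mem_patterns_iff by (auto split: if_splits)
  then have "stack i f \<subseteq> patterns {..<n}" unfolding stack_def by blast
  moreover have "cube r \<inter> cube r' = {}"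
    if r: "r \<in> stack i f" and r': "r' \<in> stack i f" and "r \<noteq> r'" for r r'
  proof (rule ccontr)
    obtain a p a' p' where p: "a < q" "p \<in> f a" "r = p(i \<mapsto> a)" and p': "a' < q" "p' \<in> f a'" "r' = p'(i \<mapsto> a')"
      using r r' unfolding mem by blast
    assume "cube r \<inter> cube r' \<noteq> {}"
    then obtain x where "x \<in> cube p" "x i = a" "x \<in> cube p'" "x i = a'"
      using cube_stack[OF p(1,2)] cube_stack[OF p'(1,2)] p(3) p'(3) by auto
    then show False using cube_partition_unique[OF fX[OF p(1)] p(2)] p p' \<open>r \<noteq> r'\<close> by blast
  qed
  moreover have "\<Union>(cube ` stack i f) = hcube q n"
  proof (intro equalityI subsetI)
    fix x assume "x \<in> hcube q n"
    then obtain p where "p \<in> f (x i)" "x \<in> cube p" "x i < q"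
      using cube_partition_cover[OF fX] i unfolding mem_hcube_iff by blast
    then show "x \<in> \<Union>(cube ` stack i f)" using cube_stack mem by blast
  qed (use cube_subset_hcube in blast)
  moreover have "card (dom r) = Suc m" if r: "r \<in> stack i f" for r
  proof -
    obtain a p where p: "a < q" "p \<in> f a" "r = p(i \<mapsto> a)" using r unfolding mem by blast
    have "finite (dom p)" using finite_dom_pattern[OF cube_partition_patterns[OF fX[OF p(1)] p(2)]] .
    moreover have "i \<notin> dom p" using None[OF p(1,2)] by blast
    moreover have "card (dom p) = m" using f[OF p(1)] p(2) unfolding codim_partitions_def by blast
    ultimately show ?thesis using p(3) by simp
  qed
  ultimately show ?thesis unfolding codim_partitions_def cube_partition_def by blast
qed

lemma stack_restrict: "stack i (restrict f {..<q}) = stack i f"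
  unfolding stack_def by simp

lemma card_codim_partitions_common_coord:
  "card {B \<in> codim_partitions (Suc m). \<Inter>(dom ` B) \<noteq> {}} \<le> n * card (codim_partitions m) ^ q"
proof -
  let ?W = "\<Union>i<n. stack i ` PiE {..<q} (\<lambda>_. codim_partitions m)"
  have "{B \<in> codim_partitions (Suc m). \<Inter>(dom ` B) \<noteq> {}} \<subseteq> ?W"
  proof
    fix B assume "B \<in> {B \<in> codim_partitions (Suc m). \<Inter>(dom ` B) \<noteq> {}}"
    then obtain i where B: "B \<in> codim_partitions (Suc m)" and common: "\<forall>p\<in>B. i \<in> dom p" by blast
    have BX: "cube_partition B (hcube q n)" using B unfolding codim_partitions_def by blast
    obtain p where "p \<in> B" using codim_partition_nonempty[OF B] by blast
    then have i: "i < n" using common dom_subset_support support_subset[OF BX] by blast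
    have "restrict (\<lambda>a. slice B i {Some a}) {..<q} \<in> PiE {..<q} (\<lambda>_. codim_partitions m)"
      using slice_in_codim_partitions[OF B i common] by simp
    moreover have "B = stack i (restrict (\<lambda>a. slice B i {Some a}) {..<q})"
      using stack_slices[OF _ common] cube_partition_patterns[OF BX] by (simp add: stack_restrict subsetI)
    ultimately show "B \<in> ?W" using i by blast
  qed
  then have "card {B \<in> codim_partitions (Suc m). \<Inter>(dom ` B) \<noteq> {}} \<le> card ?W"
    by (intro card_mono) (auto simp: finite_codim_partitions finite_PiE)
  also have "\<dots> \<le> (\<Sum>i<n. card (stack i ` PiE {..<q} (\<lambda>_. codim_partitions m)))"
    by (rule card_UN_le) simp
  also have "\<dots> \<le> (\<Sum>i<n. card (PiE {..<q} (\<lambda>_. codim_partitions m)))"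
    by (intro sum_mono card_image_le) (simp add: finite_codim_partitions finite_PiE)
  also have "\<dots> = n * card (codim_partitions m) ^ q" by (simp add: card_PiE)
  finally show ?thesis .
qed

lemma card_support_lt_repunit:
  assumes B: "B \<in> codim_partitions (Suc m)" and "\<Inter>(dom ` B) = {}"
  shows "card (support B) < repunit q (Suc m)"
proof -
  have BX: "cube_partition B (hcube q n)" using B unfolding codim_partitions_def by blast
  obtain p where p: "p \<in> B" using codim_partition_nonempty[OF B] by blast
  then have "dom p \<noteq> {}" using B unfolding codim_partitions_def by fastforce
  then have "support B \<noteq> {}" using dom_subset_support[OF p] by blast
  then have "2 + (q - 1) * card (support B) \<le> q ^ Suc m"
    using card_ge_support_if_no_common_coord[OF BX _ assms(2)] card_codim_partition[OF B] by simp
  also have "\<dots> = 1 + (q - 1) * repunit q (Suc m)"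
    using repunit_eq[of q "Suc m"] two_le_q by simp
  finally have "(q - 1) * card (support B) < (q - 1) * repunit q (Suc m)" by linarith
  then show ?thesis using mult_less_cancel1 by blast
qed

lemma card_codim_partitions_no_common_coord:
  fixes m :: nat
  defines "t \<equiv> repunit q (Suc m) - 1"
  shows "card {B \<in> codim_partitions (Suc m). \<Inter>(dom ` B) = {}} \<le> Suc t * 2 ^ ((q + 1) ^ t) * (n + 1) ^ t"
proof -
  let ?SS = "{S. S \<subseteq> {..<n} \<and> card S \<le> t}"
  have fin: "finite S" if "S \<in> ?SS" for S
    using that finite_subset[of S "{..<n}"] by blast
  have card_Pow_patterns: "card (Pow (patterns S)) \<le> 2 ^ ((q + 1) ^ t)" if "S \<in> ?SS" for S
  proof -
    have "card (patterns S) \<le> (q + 1) ^ card S" using card_patterns_le(2)[OF fin[OF that]] .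
    also have "\<dots> \<le> (q + 1) ^ t" using that by (intro power_increasing) auto
    finally show ?thesis
      using card_patterns_le(1)[OF fin[OF that]] by (simp add: card_Pow power_increasing)
  qed
  have "{B \<in> codim_partitions (Suc m). \<Inter>(dom ` B) = {}} \<subseteq> (\<Union>S\<in>?SS. Pow (patterns S))"
  proof
    fix B assume "B \<in> {B \<in> codim_partitions (Suc m). \<Inter>(dom ` B) = {}}"
    then have B: "B \<in> codim_partitions (Suc m)" and "\<Inter>(dom ` B) = {}" by auto
    then have "card (support B) \<le> t" using card_support_lt_repunit[OF B] unfolding t_def by linarith
    moreover have BX: "cube_partition B (hcube q n)" using B unfolding codim_partitions_def by blast
    ultimately have "support B \<in> ?SS" using support_subset[OF BX] by blast
    then show "B \<in> (\<Union>S\<in>?SS. Pow (patterns S))"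
      using cube_partition_subset_patterns_support[OF BX] by blast
  qed
  moreover have "finite (\<Union>S\<in>?SS. Pow (patterns S))"
    using fin card_patterns_le(1) by (intro finite_UN_I) auto
  ultimately have "card {B \<in> codim_partitions (Suc m). \<Inter>(dom ` B) = {}} \<le> card (\<Union>S\<in>?SS. Pow (patterns S))"
    by (rule card_mono[rotated])
  also have "\<dots> \<le> (\<Sum>S\<in>?SS. card (Pow (patterns S)))"
    by (rule card_UN_le) simp
  also have "\<dots> \<le> (\<Sum>S\<in>?SS. 2 ^ ((q + 1) ^ t))"
    using card_Pow_patterns by (rule sum_mono)
  also have "\<dots> = card ?SS * 2 ^ ((q + 1) ^ t)" by simp
  also have "\<dots> \<le> Suc t * (n + 1) ^ t * 2 ^ ((q + 1) ^ t)"
    using card_subsets_card_le[of n t] by (rule mult_le_mono1)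
  also have "\<dots> = Suc t * 2 ^ ((q + 1) ^ t) * (n + 1) ^ t" by (metis mult.assoc mult.commute)
  finally show ?thesis .
qed

lemma card_codim_partitions_Suc_le:
  fixes m :: nat
  defines "t \<equiv> repunit q (Suc m) - 1"
  shows "card (codim_partitions (Suc m)) \<le> n * card (codim_partitions m) ^ q + Suc t * 2 ^ ((q + 1) ^ t) * (n + 1) ^ t"
proof -
  let ?A = "{B \<in> codim_partitions (Suc m). \<Inter>(dom ` B) \<noteq> {}}"
    and ?B = "{B \<in> codim_partitions (Suc m). \<Inter>(dom ` B) = {}}"
  have "card (codim_partitions (Suc m)) \<le> card (?A \<union> ?B)"
    using finite_codim_partitions by (intro card_mono) auto
  also have "\<dots> \<le> card ?A + card ?B" by (rule card_Un_le)
  finally have "card (codim_partitions (Suc m)) \<le> card ?A + card ?B" .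
  then show ?thesis
    using card_codim_partitions_common_coord[of m] card_codim_partitions_no_common_coord[of m]
    unfolding t_def by linarith
qed

definition coord_lists :: "nat \<Rightarrow> nat list set" where
  "coord_lists m = {xs. length xs = repunit q m \<and> distinct xs \<and> set xs \<subseteq> {..<n}}"

text \<open>The partition read off from the complete q-ary tree of depth m whose internal nodes are
  labelled by the coordinates xs: the root coordinate comes first, followed by the labels of
  the q subtrees in turn.\<close>

primrec tree :: "nat \<Rightarrow> nat list \<Rightarrow> (nat \<rightharpoonup> nat) set" where
  "tree 0 xs = {Map.empty}"
| "tree (Suc m) xs = stack (hd xs) (\<lambda>a. tree m (chunk (repunit q m) (tl xs) a))"

lemma coord_lists_Suc:
  assumes "xs \<in> coord_lists (Suc m)"
  shows "xs = hd xs # tl xs" and "hd xs < n" and "length (tl xs) = q * repunit q m"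
proof -
  have len: "length xs = Suc (q * repunit q m)" and "set xs \<subseteq> {..<n}"
    using assms unfolding coord_lists_def by (simp_all add: repunit_Suc)
  then show xs: "xs = hd xs # tl xs" by (cases xs) simp_all
  show "hd xs < n" using \<open>set xs \<subseteq> {..<n}\<close> xs by (metis lessThan_iff list.set_intros(1) subsetD)
  show "length (tl xs) = q * repunit q m" using len by simp
qed

lemma chunk_in_coord_lists:
  assumes xs: "xs \<in> coord_lists (Suc m)" and "a < q"
  shows "chunk (repunit q m) (tl xs) a \<in> coord_lists m"
    and "set (chunk (repunit q m) (tl xs) a) \<subseteq> set xs"
    and "hd xs \<notin> set (chunk (repunit q m) (tl xs) a)"
proof -
  have "distinct xs" "set xs \<subseteq> {..<n}" using xs unfolding coord_lists_def by simp_all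
  have xs_Cons: "xs = hd xs # tl xs" by (rule coord_lists_Suc(1)[OF xs])
  then have tl: "set (tl xs) \<subseteq> set xs" "distinct (tl xs)" "hd xs \<notin> set (tl xs)"
    using \<open>distinct xs\<close> by (metis distinct.simps(2) set_subset_Cons)+
  show "set (chunk (repunit q m) (tl xs) a) \<subseteq> set xs"
    using set_chunk_subset tl(1) by fast
  then show "chunk (repunit q m) (tl xs) a \<in> coord_lists m"
    using length_chunk[OF coord_lists_Suc(3)[OF xs] \<open>a < q\<close>] distinct_chunk[OF tl(2)] \<open>set xs \<subseteq> {..<n}\<close>
    unfolding coord_lists_def by blast
  show "hd xs \<notin> set (chunk (repunit q m) (tl xs) a)"
    using set_chunk_subset tl(3) by fast
qed

lemma support_tree: "xs \<in> coord_lists m \<Longrightarrow> support (tree m xs) \<subseteq> set xs"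
proof (induction m arbitrary: xs)
  case 0
  then show ?case by (simp add: support_trivial)
next
  case (Suc m)
  have "support (tree m (chunk (repunit q m) (tl xs) a)) \<subseteq> set xs" if "a < q" for a
    using Suc.IH[OF chunk_in_coord_lists(1)[OF Suc.prems that]] chunk_in_coord_lists(2)[OF Suc.prems that]
    by blast
  moreover have "hd xs \<in> set xs" using coord_lists_Suc(1)[OF Suc.prems] by (metis list.set_intros(1))
  ultimately show ?case using support_stack by fastforce
qed

lemma tree_in_codim_partitions: "xs \<in> coord_lists m \<Longrightarrow> tree m xs \<in> codim_partitions m"
proof (induction m arbitrary: xs)
  case 0
  then show ?case by (simp add: codim_partitions_0)
next
  case (Suc m)
  show ?case unfolding tree.simps
  proof (rule stack_in_codim_partitions)
    show "hd xs < n" by (rule coord_lists_Suc(2)[OF Suc.prems])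
    fix a assume "a < q"
    note chunk = chunk_in_coord_lists[OF Suc.prems this]
    show "tree m (chunk (repunit q m) (tl xs) a) \<in> codim_partitions m" by (rule Suc.IH[OF chunk(1)])
    show "hd xs \<notin> support (tree m (chunk (repunit q m) (tl xs) a))"
      using support_tree[OF chunk(1)] chunk(3) by blast
  qed
qed

lemma inj_on_tree: "inj_on (tree m) (coord_lists m)"
proof (induction m)
  case 0
  show ?case by (rule inj_onI) (simp add: coord_lists_def repunit_def)
next
  case (Suc m)
  show ?case
  proof (rule inj_onI)
    fix xs ys assume xs: "xs \<in> coord_lists (Suc m)" and ys: "ys \<in> coord_lists (Suc m)"
      and eq: "tree (Suc m) xs = tree (Suc m) ys"
    define f where "f a = tree m (chunk (repunit q m) (tl xs) a)" for a
    define g where "g a = tree m (chunk (repunit q m) (tl ys) a)" for a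
    have f: "f a \<in> codim_partitions m" "hd xs \<notin> support (f a)" if "a < q" for a
      using chunk_in_coord_lists[OF xs that] tree_in_codim_partitions support_tree unfolding f_def by blast+
    have g: "g a \<in> codim_partitions m" "hd ys \<notin> support (g a)" if "a < q" for a
      using chunk_in_coord_lists[OF ys that] tree_in_codim_partitions support_tree unfolding g_def by blast+
    have hd: "hd xs = hd ys"
    proof (rule ccontr)
      assume ne: "hd xs \<noteq> hd ys"
      have common: "hd ys \<in> \<Inter>(dom ` stack (hd xs) f)"
        using eq i_in_dom_stack[of _ "hd ys" g] unfolding tree.simps f_def g_def by blast
      have "hd ys \<in> set (chunk (repunit q m) (tl xs) a)" if a: "a < q" for a
      proof -
        obtain p where "p \<in> f a" using codim_partition_nonempty[OF f(1)[OF a]] by blast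
        then have "hd ys \<in> support (f a)"
          using dom_in_common_coord_stack[OF common ne[symmetric] a] dom_subset_support by blast
        then show ?thesis using support_tree[OF chunk_in_coord_lists(1)[OF xs a]] unfolding f_def by blast
      qed
      moreover have "distinct (tl xs)" using xs unfolding coord_lists_def by (simp add: distinct_tl)
      ultimately show False using disjoint_chunks[of "tl xs" 0 1] two_le_q by fastforce
    qed
    have "f a = g a" if "a < q" for a
      using slice_stack[of a "hd xs" f, OF that f(2)[OF that]] slice_stack[of a "hd ys" g, OF that g(2)[OF that]] eq hd
      unfolding tree.simps f_def g_def by simp
    then have "chunk (repunit q m) (tl xs) a = chunk (repunit q m) (tl ys) a" if "a < q" for a
      using Suc.IH chunk_in_coord_lists(1)[OF xs that] chunk_in_coord_lists(1)[OF ys that] that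
      unfolding f_def g_def by (meson inj_onD)
    then have "tl xs = tl ys" using eq_if_chunks_eq coord_lists_Suc(3)[OF xs] coord_lists_Suc(3)[OF ys] by metis
    then show "xs = ys" using hd coord_lists_Suc(1)[OF xs] coord_lists_Suc(1)[OF ys] by metis
  qed
qed

lemma card_codim_partitions_lower:
  assumes "repunit q m \<le> n"
  shows "(n + 1 - repunit q m) ^ repunit q m \<le> card (codim_partitions m)"
proof -
  let ?N = "repunit q m"
  have "(n + 1 - ?N) ^ ?N = (\<Prod>i\<in>{n - ?N + 1..n}. n + 1 - ?N)"
    using assms by simp
  also have "\<dots> \<le> \<Prod>{n - ?N + 1..n}" by (intro prod_mono) auto
  also have "\<dots> = card (coord_lists m)"
    using card_lists_distinct_length_eq[of "{..<n}" ?N] assms unfolding coord_lists_def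
    by (simp add: conj_commute)
  also have "\<dots> = card (tree m ` coord_lists m)" by (rule card_image[OF inj_on_tree, symmetric])
  also have "\<dots> \<le> card (codim_partitions m)"
    using tree_in_codim_partitions finite_codim_partitions by (intro card_mono) auto
  finally show ?thesis .
qed

lemma cube_eq_fixing: "cube (\<lambda>i. if i \<in> S then Some (a i) else None) = {x \<in> hcube q n. \<forall>i\<in>S. x i = a i}"
  unfolding cube_def by auto

lemma subcube_iff_cube:
  assumes "m \<le> n"
  shows "subcube q n (n - m) C \<longleftrightarrow> (\<exists>p\<in>patterns {..<n}. card (dom p) = m \<and> C = cube p)"
proof
  assume "subcube q n (n - m) C"
  then obtain S a where S: "S \<subseteq> {..<n}" "card S = m" "\<forall>i\<in>S. a i < q"
    and C: "C = {x \<in> hcube q n. \<forall>i\<in>S. x i = a i}"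
    using assms unfolding subcube_def by auto
  let ?p = "\<lambda>i. if i \<in> S then Some (a i) else None"
  have "dom ?p = S" by (auto simp: dom_def)
  moreover have "?p \<in> patterns {..<n}" using S unfolding mem_patterns_iff by auto
  ultimately show "\<exists>p\<in>patterns {..<n}. card (dom p) = m \<and> C = cube p"
    using S(2) C cube_eq_fixing by metis
next
  assume "\<exists>p\<in>patterns {..<n}. card (dom p) = m \<and> C = cube p"
  then obtain p where p: "p \<in> patterns {..<n}" "card (dom p) = m" "C = cube p" by blast
  have "p = (\<lambda>i. if i \<in> dom p then Some (the (p i)) else None)" by (auto simp: dom_def)
  then have "C = {x \<in> hcube q n. \<forall>i\<in>dom p. x i = the (p i)}" using p(3) cube_eq_fixing by metis
  moreover have "dom p \<subseteq> {..<n}" "\<forall>i\<in>dom p. the (p i) < q"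
    using p(1) unfolding patterns_def by (auto simp: ran_def)
  ultimately show "subcube q n (n - m) C"
    using assms p(2) unfolding subcube_def
    by (intro conjI exI[of _ "dom p"] exI[of _ "\<lambda>i. the (p i)"]) auto
qed

lemma subcube_partition_image_cube_iff:
  assumes "B \<subseteq> patterns {..<n}"
  shows "subcube_partition q n (cube ` B) \<longleftrightarrow> cube_partition B (hcube q n)"
proof -
  have subcubes: "\<exists>d. subcube q n d C" if C: "C \<in> cube ` B" for C
  proof -
    obtain p where p: "p \<in> B" "C = cube p" using C by blast
    have "dom p \<subseteq> {..<n}" using assms p(1) unfolding patterns_def by blast
    then have "card (dom p) \<le> n" by (metis card_lessThan card_mono finite_lessThan)
    then show ?thesis using subcube_iff_cube[of "card (dom p)" C] assms p by blast
  qed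
  have "subcube_partition q n (cube ` B) \<longleftrightarrow> (\<forall>x\<in>hcube q n. \<exists>!C. C \<in> cube ` B \<and> x \<in> C)"
    unfolding subcube_partition_def using subcubes by simp
  also have "\<dots> \<longleftrightarrow> cube_partition B (hcube q n)"
    unfolding ex1_mem_image_iff[OF inj_on_subset[OF inj_on_cube assms] cube_subset_hcube] cube_partition_def
    using assms by simp
  finally show ?thesis .
qed

lemma c_coord_eq_card_codim_partitions:
  assumes "m \<le> n"
  shows "c_coord q n m = card (codim_partitions m)"
proof -
  have "{P. subcube_partition q n P \<and> (\<forall>C\<in>P. subcube q n (n - m) C) \<and> card P = q ^ m}
      = image cube ` codim_partitions m"
  proof (intro equalityI subsetI)
    fix P assume "P \<in> {P. subcube_partition q n P \<and> (\<forall>C\<in>P. subcube q n (n - m) C) \<and> card P = q ^ m}"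
    then have P: "subcube_partition q n P" "\<forall>C\<in>P. subcube q n (n - m) C" by simp_all
    define B where "B = {p \<in> patterns {..<n}. card (dom p) = m \<and> cube p \<in> P}"
    have B: "B \<subseteq> patterns {..<n}" unfolding B_def by blast
    have "P \<subseteq> cube ` B"
    proof
      fix C assume "C \<in> P"
      then obtain p where "p \<in> patterns {..<n}" "card (dom p) = m" "C = cube p"
        using P(2) subcube_iff_cube[OF assms] by blast
      then show "C \<in> cube ` B" using \<open>C \<in> P\<close> unfolding B_def by blast
    qed
    then have P_eq: "P = cube ` B" unfolding B_def by blast
    then have "cube_partition B (hcube q n)"
      using P(1) subcube_partition_image_cube_iff[OF B] by simp
    then have "B \<in> codim_partitions m" unfolding codim_partitions_def B_def by simp
    then show "P \<in> image cube ` codim_partitions m" using P_eq by blast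
  next
    fix P assume "P \<in> image cube ` codim_partitions m"
    then obtain B where B: "B \<in> codim_partitions m" and P: "P = cube ` B" by blast
    have part: "cube_partition B (hcube q n)" and dom: "\<forall>p\<in>B. card (dom p) = m"
      using B unfolding codim_partitions_def by simp_all
    have pat: "B \<subseteq> patterns {..<n}" using cube_partition_patterns[OF part] by blast
    have "subcube_partition q n P" using subcube_partition_image_cube_iff[OF pat] part P by simp
    moreover have "\<forall>C\<in>P. subcube q n (n - m) C"
      using subcube_iff_cube[OF assms] pat dom P by blast
    moreover have "card P = q ^ m"
      using card_image[OF inj_on_subset[OF inj_on_cube pat]] card_codim_partition[OF B] P by simp
    ultimately show "P \<in> {P. subcube_partition q n P \<and> (\<forall>C\<in>P. subcube q n (n - m) C) \<and> card P = q ^ m}"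
      by simp
  qed
  moreover have "inj_on (image cube) (codim_partitions m)"
    using inj_on_image_Pow[OF inj_on_cube] by (rule inj_on_subset)
      (auto simp: codim_partitions_def cube_partition_def)
  ultimately show ?thesis unfolding c_coord_def by (simp add: card_image)
qed

end

section \<open>Asymptotics\<close>

lemma card_codim_partitions_upper:
  assumes "2 \<le> q"
  shows "\<exists>K. \<forall>n. card (hypercube.codim_partitions q n m) \<le> (n + K) ^ repunit q m"
proof (induction m)
  case 0
  have "card (hypercube.codim_partitions q n 0) = 1" for n
  proof -
    interpret hypercube q n by unfold_locales (rule assms)
    show ?thesis by (simp add: codim_partitions_0)
  qed
  then show ?case by (simp add: repunit_def)
next
  case (Suc m)
  then obtain K where K: "\<And>n. card (hypercube.codim_partitions q n m) \<le> (n + K) ^ repunit q m" by blast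
  define t where "t = repunit q (Suc m) - 1"
  define D where "D = Suc t * 2 ^ ((q + 1) ^ t)"
  have t: "t = q * repunit q m" unfolding t_def by (simp add: repunit_Suc)
  have "card (hypercube.codim_partitions q n (Suc m)) \<le> (n + (K + 1 + D)) ^ repunit q (Suc m)" for n
  proof -
    interpret hypercube q n by unfold_locales (rule assms)
    define x where "x = n + K + 1"
    have "card (codim_partitions m) ^ q \<le> ((n + K) ^ repunit q m) ^ q" by (rule power_mono[OF K]) simp
    also have "\<dots> = (n + K) ^ t" unfolding t by (simp add: power_mult[symmetric] mult.commute)
    also have "\<dots> \<le> x ^ t" unfolding x_def by (rule power_mono) simp_all
    finally have "n * card (codim_partitions m) ^ q \<le> n * x ^ t" by (rule mult_le_mono2)
    moreover have "(n + 1) ^ t \<le> x ^ t" unfolding x_def by (rule power_mono) simp_all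
    then have "D * (n + 1) ^ t \<le> D * x ^ t" by (rule mult_le_mono2)
    moreover have "card (codim_partitions (Suc m)) \<le> n * card (codim_partitions m) ^ q + D * (n + 1) ^ t"
      using card_codim_partitions_Suc_le[of m] unfolding D_def t_def .
    ultimately have "card (codim_partitions (Suc m)) \<le> n * x ^ t + D * x ^ t" by linarith
    also have "\<dots> = (n + D) * x ^ t" by (simp add: algebra_simps)
    also have "\<dots> \<le> (x + D) * (x + D) ^ t"
      unfolding x_def by (intro mult_le_mono power_mono) auto
    also have "\<dots> = (n + (K + 1 + D)) ^ repunit q (Suc m)"
      unfolding x_def t by (simp add: repunit_Suc add.assoc)
    finally show ?thesis .
  qed
  then show ?case by blast
qed

lemma c_coord_bounds:
  assumes "2 \<le> q"
  obtains K where "\<And>n. m + repunit q m \<le> n \<Longrightarrow>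
      (n + 1 - repunit q m) ^ repunit q m \<le> c_coord q n m \<and> c_coord q n m \<le> (n + K) ^ repunit q m"
proof -
  obtain K where K: "\<And>n. card (hypercube.codim_partitions q n m) \<le> (n + K) ^ repunit q m"
    using card_codim_partitions_upper[OF assms] by blast
  have "(n + 1 - repunit q m) ^ repunit q m \<le> c_coord q n m \<and> c_coord q n m \<le> (n + K) ^ repunit q m"
    if "m + repunit q m \<le> n" for n
  proof -
    interpret hypercube q n by unfold_locales (rule assms)
    show ?thesis using that K[of n] card_codim_partitions_lower c_coord_eq_card_codim_partitions by simp
  qed
  then show ?thesis using that by blast
qed

lemma asymp_equiv_shifted_power: "(\<lambda>n. (real n + c) ^ N) \<sim>[at_top] (\<lambda>n. real n ^ N)"
proof -
  have "(\<lambda>n. 1 + c / real n) \<longlonglongrightarrow> 1 + 0" by (intro tendsto_add tendsto_const lim_const_over_n)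
  moreover have "\<forall>\<^sub>F n in at_top. 1 + c / real n = (real n + c) / real n"
    using eventually_gt_at_top[of 0] by eventually_elim (simp add: field_simps)
  ultimately have "(\<lambda>n. (real n + c) / real n) \<longlonglongrightarrow> 1" by (simp add: tendsto_cong)
  then have "(\<lambda>n. real n + c) \<sim>[at_top] real" by (rule asymp_equivI')
  then show ?thesis by (rule asymp_equiv_power)
qed

lemma asymp_equiv_power_if_bounds:
  fixes f :: "nat \<Rightarrow> nat"
  assumes bounds: "\<And>n. n0 \<le> n \<Longrightarrow> (n + 1 - N) ^ N \<le> f n \<and> f n \<le> (n + K) ^ N"
  shows "(\<lambda>n. real (f n)) \<sim>[at_top] (\<lambda>n. real n ^ N)"
proof -
  define lower upper :: "nat \<Rightarrow> real"
    where "lower = (\<lambda>n. (real n + (1 - real N)) ^ N)" and "upper = (\<lambda>n. (real n + real K) ^ N)"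
  have ev: "\<forall>\<^sub>F n in at_top. 0 \<le> lower n \<and> lower n \<le> real (f n) \<and> real (f n) \<le> upper n"
    using eventually_ge_at_top[of "n0 + N"]
  proof eventually_elim
    case (elim n)
    have "real (n + 1 - N) = real n + (1 - real N)" using elim by (simp add: of_nat_diff)
    then have "lower n = real ((n + 1 - N) ^ N)" "upper n = real ((n + K) ^ N)"
      unfolding lower_def upper_def by (simp_all only: of_nat_power of_nat_add)
    then show ?case using bounds[of n] elim by (simp only: of_nat_0_le_iff of_nat_le_iff)
  qed
  have "\<forall>\<^sub>F n in at_top. 0 \<le> lower n" using ev by (rule eventually_mono) simp
  moreover have "\<forall>\<^sub>F n in at_top. lower n \<le> real (f n)" using ev by (rule eventually_mono) simp
  moreover have "\<forall>\<^sub>F n in at_top. real (f n) \<le> upper n" using ev by (rule eventually_mono) simp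
  moreover have "lower \<sim>[at_top] upper"
    using asymp_equiv_trans[OF asymp_equiv_shifted_power asymp_equiv_symI[OF asymp_equiv_shifted_power]]
    unfolding lower_def upper_def .
  ultimately have "(\<lambda>n. real (f n)) \<sim>[at_top] upper" by (rule asymp_equiv_sandwich(2))
  also have "upper \<sim>[at_top] (\<lambda>n. real n ^ N)" unfolding upper_def by (rule asymp_equiv_shifted_power)
  finally show ?thesis .
qed

theorem theorem6:
  fixes q m :: nat
  assumes "q \<ge> 2" and "m \<ge> 1"
  shows "(\<lambda>n. real (c_coord q n m)) \<sim>[at_top]
         (\<lambda>n. real n powr ((real q ^ m - 1) / (real q - 1)))"
proof -
  define N where "N = repunit q m"
  obtain K where "\<And>n. m + N \<le> n \<Longrightarrow> (n + 1 - N) ^ N \<le> c_coord q n m \<and> c_coord q n m \<le> (n + K) ^ N"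
    using c_coord_bounds[OF assms(1)] unfolding N_def by blast
  then have "(\<lambda>n. real (c_coord q n m)) \<sim>[at_top] (\<lambda>n. real n ^ N)" by (rule asymp_equiv_power_if_bounds)
  also have "\<dots> \<sim>[at_top] (\<lambda>n. real n powr ((real q ^ m - 1) / (real q - 1)))"
  proof (rule asymp_equiv_refl_ev)
    have "(real q ^ m - 1) / (real q - 1) = real N" using real_repunit[OF assms(1)] unfolding N_def by simp
    moreover have "\<forall>\<^sub>F n in at_top. real n ^ N = real n powr real N"
      using eventually_gt_at_top[of 0] by (rule eventually_mono) (simp add: powr_realpow)
    ultimately show "\<forall>\<^sub>F n in at_top. real n ^ N = real n powr ((real q ^ m - 1) / (real q - 1))"
      by simp
  qed
  finally show ?thesis .
qed

end
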